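(* Assume $\delta>d$. Then for every $(z,w)\in A_p\times\mathbb{C}$, $$\limsup_{n\to\infty}\frac{1}{\delta^n}\log^+|Q_z^n(w)|\;\le\;\alpha\, G_p(z).$$
   Context: Let $p(z)=z^\delta+O(z^{\delta-1})$ be a monic polynomial of degree $\delta\ge 2$, and let $q(z,w)=b(z)w^d+(\text{terms of lower degree in } w)$ be a polynomial with $d=\deg_w q\ge 2$, where $b$ is a monic polynomial of degree $\gamma\ge 0$. Let $f(z,w)=(p(z),q(z,w))$ (a polynomial skew product). Write $q_z(w)=q(z,w)$ and $Q_z^n=q_{p^{n-1}(z)}\circ\cdots\circ q_{p(z)}\circ q_z$, so that $f^n(z,w)=(p^n(z),Q_z^n(w))$. Let $A_p=\{z\in\mathbb{C}: p^n(z)\to\infty\}$ and $G_p(z)=\lim_{n\to\infty}\delta^{-n}\log^+|p^n(z)|$ (the Green function of $p$). For $\delta>d$, define the rational number $$\alpha=\max\Big\{\frac{n_j}{\delta-m_j}\;:\; z^{n_j}w^{m_j}\text{ is a monomial appearing in } q \text{ with nonzero coefficient}\Big\}\ \ (\ge 0).$$ *)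

theory Defs
  imports "HOL-Analysis.Analysis" "HOL-Computational_Algebra.Polynomial" "HOL-Library.Liminf_Limsup"
begin

text \<open>A polynomial q(z,w) in two variables is represented as a polynomial in w whose
  coefficients are polynomials in z: type complex poly poly.
  The coefficient of z^n w^m is coeff (coeff q m) n.\<close>

definition qeval :: "complex poly poly \<Rightarrow> complex \<Rightarrow> complex \<Rightarrow> complex" where
  "qeval q z w = (\<Sum>j\<le>degree q. poly (coeff q j) z * w ^ j)"

fun Qiter :: "complex poly \<Rightarrow> complex poly poly \<Rightarrow> nat \<Rightarrow> complex \<Rightarrow> complex \<Rightarrow> complex" where
  "Qiter p q 0 z w = w"
| "Qiter p q (Suc n) z w = Qiter p q n (poly p z) (qeval q z w)"

definition logplus :: "real \<Rightarrow> real" where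
  "logplus x = (if x \<le> 1 then 0 else ln x)"

definition escape_set :: "complex poly \<Rightarrow> complex set" where
  "escape_set p = {z. filterlim (\<lambda>n. norm ((poly p ^^ n) z)) at_top sequentially}"

definition green :: "complex poly \<Rightarrow> complex \<Rightarrow> real" where
  "green p z = lim (\<lambda>n. logplus (norm ((poly p ^^ n) z)) / real (degree p) ^ n)"

definition alpha_exp :: "complex poly \<Rightarrow> complex poly poly \<Rightarrow> real" where
  "alpha_exp p q = Max {real n / (real (degree p) - real m) | n m. coeff (coeff q m) n \<noteq> 0}"

end

theory Submission imports Defs begin

(* Write r k = log+ |p^k(z)| and u k = log+ |Q^k_z(w)|.  Two estimates drive the proof:
   (1) for a monic p of degree delta, log+ |p(z)| = delta log+ |z| + O(1) for large |z|;
       along an escaping orbit this gives |r (k+1) - delta r k| <= K, hence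
       r k / delta^k converges, namely to the Green function G_p(z);
   (2) by the definition of alpha, every monomial z^n w^m of q satisfies
       n log+|z| + m log+|w| <= alpha delta log+|z| + d max(0, log+|w| - alpha log+|z|),
       hence u (k+1) <= C + alpha delta r k + d max(0, u k - alpha r k).
   The excess v k = max(0, u k - alpha r k) then obeys v (k+1) <= C' + d v k, so it grows
   at most like k d^k, which is o(delta^k); thus u k / delta^k <= alpha r k / delta^k + o(1). *)

section \<open>Real sequences with controlled growth\<close>

text \<open>If \<open>r (k+1)\<close> differs from \<open>\<delta> r k\<close> by a bounded amount, then \<open>r k / \<delta>^k\<close> converges:
  its increments are bounded by a geometric series. This yields existence of the Green function.\<close>
lemma convergent_div_power_of_bounded_defect:
  fixes r :: "nat \<Rightarrow> real" and \<delta> K :: real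
  assumes \<delta>: "\<delta> > 1" and defect: "\<And>k. k \<ge> N \<Longrightarrow> \<bar>r (Suc k) - \<delta> * r k\<bar> \<le> K"
  shows "convergent (\<lambda>n. r n / \<delta> ^ n)"
proof -
  define t where "t n = r (n + N) / \<delta> ^ (n + N)" for n
  have K0: "K \<ge> 0" using defect[of N] by linarith
  have increment: "norm (t (Suc n) - t n) \<le> K * (1/\<delta>) ^ n" for n
  proof -
    have "t (Suc n) - t n = (r (Suc (n+N)) - \<delta> * r (n+N)) / \<delta> ^ Suc (n + N)"
      unfolding t_def using \<delta> by (simp add: field_simps)
    hence "norm (t (Suc n) - t n) = \<bar>r (Suc (n+N)) - \<delta> * r (n+N)\<bar> / \<delta> ^ Suc (n + N)"
      using \<delta> by simp
    also have "\<dots> \<le> K / \<delta> ^ Suc (n + N)"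
      using defect[of "n+N"] \<delta> by (intro divide_right_mono) auto
    also have "\<dots> \<le> K / \<delta> ^ n"
      using \<delta> K0 by (intro divide_left_mono power_increasing) auto
    finally show ?thesis by (simp add: power_divide)
  qed
  have "summable (\<lambda>n. K * (1/\<delta>) ^ n)" using \<delta> by (intro summable_mult summable_geometric) auto
  hence "summable (\<lambda>n. t (Suc n) - t n)"
    by (rule summable_comparison_test[rotated]) (use increment in auto)
  from summable_LIMSEQ[OF this] have "(\<lambda>n. t n - t 0) \<longlonglongrightarrow> (\<Sum>n. t (Suc n) - t n)"
    by (simp add: sum_lessThan_telescope)
  hence "(\<lambda>n. (t n - t 0) + t 0) \<longlonglongrightarrow> (\<Sum>n. t (Suc n) - t n) + t 0"
    by (intro tendsto_add) auto
  hence "(\<lambda>n. r (n + N) / \<delta> ^ (n + N)) \<longlonglongrightarrow> (\<Sum>n. t (Suc n) - t n) + t 0"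
    by (simp add: t_def)
  hence "(\<lambda>n. r n / \<delta> ^ n) \<longlonglongrightarrow> (\<Sum>n. t (Suc n) - t n) + t 0"
    by (rule LIMSEQ_offset)
  thus ?thesis by (rule convergentI)
qed

lemma affine_recursion_bound:
  fixes v :: "nat \<Rightarrow> real" and C d :: real
  assumes "d \<ge> 1" "C \<ge> 0" and step: "\<And>k. k \<ge> N \<Longrightarrow> v (Suc k) \<le> C + d * v k"
  shows "v (N + k) \<le> (v N + C * k) * d ^ k"
proof (induction k)
  case 0 then show ?case by simp
next
  case (Suc k)
  have "v (N + Suc k) \<le> C + d * v (N + k)" using step[of "N+k"] by simp
  also have "\<dots> \<le> C + d * ((v N + C * k) * d ^ k)"
    using Suc assms(1) by (intro add_left_mono mult_left_mono) auto
  also have "\<dots> \<le> C * d ^ Suc k + (v N + C * k) * d ^ Suc k"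
    using assms(1,2) one_le_power[of d "Suc k"] by (simp add: mult_le_cancel_left1)
  also have "\<dots> = (v N + C * Suc k) * d ^ Suc k" by (simp add: algebra_simps)
  finally show ?case .
qed

lemma affine_recursion_div_power_tendsto_0:
  fixes v :: "nat \<Rightarrow> real" and C d \<delta> :: real
  assumes "\<delta> > d" "d \<ge> 1" "C \<ge> 0" and v0: "\<And>k. v k \<ge> 0"
    and step: "\<And>k. k \<ge> N \<Longrightarrow> v (Suc k) \<le> C + d * v k"
  shows "(\<lambda>k. v k / \<delta> ^ k) \<longlonglongrightarrow> 0"
proof -
  define \<rho> where "\<rho> = d / \<delta>"
  have \<delta>: "\<delta> > 0" using assms by simp
  have \<rho>: "0 \<le> \<rho>" "\<rho> < 1" unfolding \<rho>_def using assms by auto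
  define bound where "bound k = (v N * \<rho> ^ k + C * (real k * \<rho> ^ k)) / \<delta> ^ N" for k
  have "bound \<longlonglongrightarrow> (v N * 0 + C * 0) / \<delta> ^ N"
    unfolding bound_def using \<rho> \<delta> by (intro tendsto_intros powser_times_n_limit_0 LIMSEQ_power_zero) auto
  hence bound_0: "bound \<longlonglongrightarrow> 0" by simp
  have below_bound: "v (k + N) / \<delta> ^ (k + N) \<le> bound k" for k
  proof -
    have "v (k + N) / \<delta> ^ (k + N) \<le> (v N + C * k) * d ^ k / \<delta> ^ (k + N)"
      using affine_recursion_bound[where v=v and N=N and k=k, OF assms(2,3) step] \<delta>
      by (intro divide_right_mono) (auto simp: add.commute)
    also have "\<dots> = bound k"
      unfolding bound_def \<rho>_def using \<delta> by (simp add: power_add field_simps)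
    finally show ?thesis .
  qed
  have "(\<lambda>k. v (k + N) / \<delta> ^ (k + N)) \<longlonglongrightarrow> 0"
    by (rule real_tendsto_sandwich[OF _ _ tendsto_const bound_0])
       (use v0 \<delta> below_bound in auto)
  thus ?thesis by (rule LIMSEQ_offset)
qed

text \<open>The excess \<open>max 0 (u k - \<alpha> r k)\<close> satisfies an affine recursion.\<close>
lemma limsup_div_power_le:
  fixes r u :: "nat \<Rightarrow> real" and \<delta> d K C \<alpha> G :: real
  assumes "\<delta> > d" "d \<ge> 1" "C \<ge> 0"
    and defect: "\<And>k. k \<ge> N \<Longrightarrow> \<bar>r (Suc k) - \<delta> * r k\<bar> \<le> K"
    and u_step: "\<And>k. k \<ge> N \<Longrightarrow> u (Suc k) \<le> C + \<alpha> * \<delta> * r k + d * max 0 (u k - \<alpha> * r k)"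
    and G: "(\<lambda>n. r n / \<delta> ^ n) \<longlonglongrightarrow> G"
  shows "limsup (\<lambda>n. ereal (u n / \<delta> ^ n)) \<le> ereal (\<alpha> * G)"
proof -
  define v where "v k = max 0 (u k - \<alpha> * r k)" for k
  define C' where "C' = C + \<bar>\<alpha>\<bar> * K"
  have C': "C' \<ge> 0" unfolding C'_def using assms(3) defect[of N] by simp
  have v_step: "v (Suc k) \<le> C' + d * v k" if "k \<ge> N" for k
  proof -
    have "\<alpha> * (\<delta> * r k - r (Suc k)) \<le> \<bar>\<alpha>\<bar> * \<bar>r (Suc k) - \<delta> * r k\<bar>"
      by (metis abs_ge_self abs_minus_commute abs_mult)
    also have "\<dots> \<le> \<bar>\<alpha>\<bar> * K" using defect[OF that] by (intro mult_left_mono) auto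
    finally have "u (Suc k) - \<alpha> * r (Suc k) \<le> C' + d * v k"
      using u_step[OF that] unfolding C'_def v_def by (simp add: algebra_simps)
    moreover have "0 \<le> C' + d * v k" using C' assms(2) unfolding v_def by simp
    ultimately show ?thesis unfolding v_def by simp
  qed
  have "v k \<ge> 0" for k unfolding v_def by simp
  hence "(\<lambda>k. v k / \<delta> ^ k) \<longlonglongrightarrow> 0"
    by (rule affine_recursion_div_power_tendsto_0[where v=v, OF assms(1,2) C' _ v_step])
  hence "(\<lambda>n. \<alpha> * (r n / \<delta> ^ n) + v n / \<delta> ^ n) \<longlonglongrightarrow> \<alpha> * G + 0"
    by (intro tendsto_intros G)
  hence majorant: "(\<lambda>n. ereal (\<alpha> * (r n / \<delta> ^ n) + v n / \<delta> ^ n)) \<longlonglongrightarrow> ereal (\<alpha> * G)"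
    by simp
  have "limsup (\<lambda>n. ereal (u n / \<delta> ^ n)) \<le> limsup (\<lambda>n. ereal (\<alpha> * (r n / \<delta> ^ n) + v n / \<delta> ^ n))"
  proof (intro Limsup_mono always_eventually allI)
    fix n
    have "u n \<le> \<alpha> * r n + v n" unfolding v_def by simp
    hence "u n / \<delta> ^ n \<le> (\<alpha> * r n + v n) / \<delta> ^ n" using assms(1,2) by (intro divide_right_mono) auto
    thus "ereal (u n / \<delta> ^ n) \<le> ereal (\<alpha> * (r n / \<delta> ^ n) + v n / \<delta> ^ n)"
      by (simp add: add_divide_distrib)
  qed
  also have "\<dots> = ereal (\<alpha> * G)" by (rule lim_imp_Limsup[OF _ majorant]) simp
  finally show ?thesis .
qed

section \<open>Estimates for the skew product\<close>

lemma Qiter_Suc_last: "Qiter p q (Suc n) z w = qeval q ((poly p ^^ n) z) (Qiter p q n z w)"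
proof (induction n arbitrary: z w)
  case 0 then show ?case by simp
next
  case (Suc n)
  have "Qiter p q (Suc (Suc n)) z w = Qiter p q (Suc n) (poly p z) (qeval q z w)" by simp
  also have "\<dots> = qeval q ((poly p ^^ n) (poly p z)) (Qiter p q n (poly p z) (qeval q z w))"
    by (rule Suc)
  also have "\<dots> = qeval q ((poly p ^^ Suc n) z) (Qiter p q (Suc n) z w)"
    by (simp add: funpow_swap1)
  finally show ?case .
qed

lemma logplus_eq_ln_max: "x \<ge> 0 \<Longrightarrow> logplus x = ln (max 1 x)"
  unfolding logplus_def by auto

lemma logplus_nonneg: "logplus x \<ge> 0"
  unfolding logplus_def by auto

lemma max_1_eq_exp_logplus: "x \<ge> 0 \<Longrightarrow> max 1 x = exp (logplus x)"
  by (simp add: logplus_eq_ln_max)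

lemma monic_poly_norm_bounds:
  fixes p :: "'a::{real_normed_field} poly"
  assumes "degree p \<ge> 1" "lead_coeff p = 1"
  obtains R A where "A \<ge> 1" "\<And>z. norm z \<ge> R \<Longrightarrow>
      norm z \<ge> 2 \<and> norm z ^ degree p / 2 \<le> norm (poly p z) \<and> norm (poly p z) \<le> A * norm z ^ degree p"
proof -
  define n where "n = degree p"
  define B where "B = (\<Sum>i<n. norm (coeff p i))"
  have B0: "B \<ge> 0" unfolding B_def by (simp add: sum_nonneg)
  have n1: "n \<ge> 1" using assms n_def by simp
  define tail where "tail z = (\<Sum>i<n. coeff p i * z ^ i)" for z
  have split: "poly p z = z ^ n + tail z" for z
  proof -
    have "poly p z = (\<Sum>i<Suc n. coeff p i * z ^ i)"
      unfolding poly_altdef n_def by (simp add: lessThan_Suc_atMost)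
    thus ?thesis using assms(2) unfolding tail_def n_def by simp
  qed
  have bounds: "norm z \<ge> 2 \<and> norm z ^ n / 2 \<le> norm (poly p z) \<and> norm (poly p z) \<le> (1 + B) * norm z ^ n"
    if zR: "norm z \<ge> 2 + 2 * B" for z
  proof -
    have z2: "norm z \<ge> 2" using zR B0 by simp
    have "norm (tail z) \<le> (\<Sum>i<n. norm (coeff p i) * norm z ^ i)"
      unfolding tail_def by (rule order.trans[OF norm_sum]) (simp add: norm_mult norm_power)
    also have "\<dots> \<le> (\<Sum>i<n. norm (coeff p i) * norm z ^ (n - 1))"
      using z2 by (intro sum_mono mult_left_mono power_increasing) auto
    also have "\<dots> = B * norm z ^ (n - 1)" unfolding B_def by (simp add: sum_distrib_right)
    finally have tail_le: "norm (tail z) \<le> B * norm z ^ (n - 1)" .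
    have zn: "norm z ^ n = norm z * norm z ^ (n - 1)" using n1 by (simp add: power_eq_if)
    have "2 * B * norm z ^ (n - 1) \<le> norm z * norm z ^ (n - 1)"
      using zR by (intro mult_right_mono) auto
    hence small_tail: "norm (tail z) \<le> norm z ^ n / 2" using tail_le zn by simp
    have "B * norm z ^ (n - 1) \<le> B * norm z ^ n"
      using z2 B0 by (intro mult_left_mono power_increasing) auto
    hence "norm (tail z) \<le> B * norm z ^ n" using tail_le by linarith
    hence upper: "norm (poly p z) \<le> (1 + B) * norm z ^ n"
      unfolding split using norm_triangle_ineq[of "z ^ n" "tail z"] by (simp add: norm_power algebra_simps)
    have "norm z ^ n - norm (tail z) \<le> norm (poly p z)"
      unfolding split using norm_triangle_ineq2[of "z ^ n" "- tail z"] by (simp add: norm_power)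
    thus ?thesis using small_tail upper z2 by simp
  qed
  show ?thesis by (rule that[of "1 + B" "2 + 2 * B"]) (use B0 bounds n_def in auto)
qed

lemma logplus_monic_poly_bounded_defect:
  fixes p :: "'a::{real_normed_field} poly"
  assumes "degree p \<ge> 1" "lead_coeff p = 1"
  obtains R K where "\<And>z. norm z \<ge> R \<Longrightarrow>
     \<bar>logplus (norm (poly p z)) - real (degree p) * logplus (norm z)\<bar> \<le> K"
proof -
  define n where "n = degree p"
  obtain R A where A: "A \<ge> 1" and bnd: "\<And>z. norm z \<ge> R \<Longrightarrow>
      norm z \<ge> 2 \<and> norm z ^ n / 2 \<le> norm (poly p z) \<and> norm (poly p z) \<le> A * norm z ^ n"
    unfolding n_def by (rule monic_poly_norm_bounds[OF assms]) blast
  have "(2::real) \<le> 2 ^ n" using power_increasing[of 1 n "2::real"] assms(1) n_def by simp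
  have "\<bar>logplus (norm (poly p z)) - real n * logplus (norm z)\<bar> \<le> ln A + ln 2"
    if zR: "norm z \<ge> R" for z
  proof -
    from bnd[OF zR] have z2: "norm z \<ge> 2" and lo: "norm z ^ n / 2 \<le> norm (poly p z)"
      and up: "norm (poly p z) \<le> A * norm z ^ n" by blast+
    have z0: "z \<noteq> 0" using z2 by auto
    have "(2::real) ^ n \<le> norm z ^ n" using z2 by (intro power_mono) auto
    hence lo1: "norm z ^ n / 2 \<ge> 1" using \<open>2 \<le> 2 ^ n\<close> by linarith
    have "norm (poly p z) \<ge> 1" using lo lo1 by linarith
    hence lp: "logplus (norm (poly p z)) = ln (norm (poly p z))"
      unfolding logplus_def by (cases "norm (poly p z) = 1") auto
    have lz: "logplus (norm z) = ln (norm z)" using z2 unfolding logplus_def by auto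
    have "ln (norm (poly p z)) \<le> ln (A * norm z ^ n)" using up lo lo1 by (intro ln_mono) auto
    also have "\<dots> = ln A + real n * ln (norm z)" using A z0 by (simp add: ln_mult ln_realpow)
    finally have upper: "ln (norm (poly p z)) \<le> ln A + real n * ln (norm z)" .
    have "real n * ln (norm z) - ln 2 = ln (norm z ^ n / 2)" using z0 by (simp add: ln_div ln_realpow)
    also have "\<dots> \<le> ln (norm (poly p z))" using lo lo1 by (intro ln_mono) auto
    finally have lower: "real n * ln (norm z) - ln 2 \<le> ln (norm (poly p z))" .
    have "ln A \<ge> 0" "ln (2::real) \<ge> 0" using A by auto
    with upper lower show ?thesis unfolding lp lz abs_le_iff by linarith
  qed
  with that show ?thesis unfolding n_def by blast
qed

text \<open>The set of quotients in the definition of \<open>\<alpha>\<close> is finite, so \<open>\<alpha>\<close> bounds each monomial: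
  \<open>n \<le> \<alpha> (\<delta> - m)\<close> whenever \<open>z^n w^m\<close> occurs in \<open>q\<close>.\<close>
lemma alpha_exp_monomial_bound:
  fixes p :: "complex poly" and q :: "complex poly poly"
  assumes "degree p > degree q" and "coeff (coeff q m) n \<noteq> 0"
  shows "m \<le> degree q" and "real n \<le> alpha_exp p q * (real (degree p) - real m)"
proof -
  define S where "S = {real n / (real (degree p) - real m) | n m. coeff (coeff q m) n \<noteq> 0}"
  define T where "T = (SIGMA m:{..degree q}. {..degree (coeff q m)})"
  have "S \<subseteq> (\<lambda>(m,n). real n / (real (degree p) - real m)) ` T"
    unfolding S_def T_def by (force intro: le_degree simp: coeff_eq_0)
  moreover have "finite T" unfolding T_def by auto
  ultimately have "finite S" by (meson finite_imageI finite_subset)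
  show m: "m \<le> degree q" using assms(2) by (metis coeff_0 le_degree)
  have "real n / (real (degree p) - real m) \<in> S" unfolding S_def using assms(2) by blast
  hence "real n / (real (degree p) - real m) \<le> alpha_exp p q"
    using \<open>finite S\<close> unfolding alpha_exp_def S_def[symmetric] by simp
  moreover have "real (degree p) - real m > 0" using m assms(1) by simp
  ultimately show "real n \<le> alpha_exp p q * (real (degree p) - real m)" by (simp add: field_simps)
qed

text \<open>Since the leading monomial \<open>z^\<gamma> w^d\<close> occurs with \<open>d < \<delta>\<close>, \<open>\<alpha> \<ge> 0\<close>.\<close>
lemma alpha_exp_nonneg:
  fixes p :: "complex poly" and q :: "complex poly poly"
  assumes "degree p > degree q" and "lead_coeff (lead_coeff q) = 1"
  shows "alpha_exp p q \<ge> 0"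
proof -
  have "coeff (coeff q (degree q)) (degree (lead_coeff q)) \<noteq> 0" using assms(2) by simp
  from alpha_exp_monomial_bound(2)[OF assms(1) this]
  have "0 \<le> alpha_exp p q * (real (degree p) - real (degree q))" by (meson of_nat_0_le_iff order.trans)
  moreover have "real (degree p) - real (degree q) > 0" using assms(1) by simp
  ultimately show ?thesis by (simp add: zero_le_mult_iff)
qed

text \<open>The exponent inequality behind the estimate of \<open>q\<close>: for a monomial \<open>z^n w^m\<close> with
  \<open>n \<le> \<alpha> (\<delta> - m)\<close> and \<open>m \<le> d\<close>, in logarithmic coordinates \<open>a = log+|z|\<close>, \<open>b = log+|w|\<close>.\<close>
lemma monomial_exponent_bound:
  fixes a b \<alpha> \<delta> :: real
  assumes "a \<ge> 0" "real n \<le> \<alpha> * (\<delta> - real m)" "m \<le> d"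
  shows "real n * a + real m * b \<le> \<alpha> * \<delta> * a + real d * max 0 (b - \<alpha> * a)"
proof -
  have "real n * a \<le> \<alpha> * (\<delta> - real m) * a" using assms(1,2) by (intro mult_right_mono) auto
  moreover have "real m * (b - \<alpha> * a) \<le> real m * max 0 (b - \<alpha> * a)" by (intro mult_left_mono) auto
  moreover have "real m * max 0 (b - \<alpha> * a) \<le> real d * max 0 (b - \<alpha> * a)"
    using assms(3) by (intro mult_right_mono) auto
  ultimately show ?thesis by (simp add: algebra_simps)
qed

lemma norm_qeval_le:
  "norm (qeval q z w) \<le> (\<Sum>m\<le>degree q. \<Sum>n\<le>degree (coeff q m).
      norm (coeff (coeff q m) n) * (norm z ^ n * norm w ^ m))"
proof -
  have "norm (qeval q z w) \<le> (\<Sum>m\<le>degree q. norm (poly (coeff q m) z * w ^ m))"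
    unfolding qeval_def by (rule norm_sum)
  also have "\<dots> \<le> (\<Sum>m\<le>degree q. \<Sum>n\<le>degree (coeff q m).
      norm (coeff (coeff q m) n) * (norm z ^ n * norm w ^ m))"
  proof (intro sum_mono)
    fix m
    have "norm (poly (coeff q m) z * w ^ m) = norm (poly (coeff q m) z) * norm w ^ m"
      by (simp add: norm_mult norm_power)
    also have "\<dots> \<le> (\<Sum>n\<le>degree (coeff q m). norm (coeff (coeff q m) n) * norm z ^ n) * norm w ^ m"
      unfolding poly_altdef
      by (intro mult_right_mono order.trans[OF norm_sum] sum_mono) (auto simp: norm_mult norm_power)
    finally show "norm (poly (coeff q m) z * w ^ m) \<le> (\<Sum>n\<le>degree (coeff q m).
        norm (coeff (coeff q m) n) * (norm z ^ n * norm w ^ m))"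
      by (simp add: sum_distrib_right mult.assoc)
  qed
  finally show ?thesis .
qed

text \<open>The key one-step estimate: \<open>log+|q(z,w)| \<le> C + \<alpha>\<delta> log+|z| + d max(0, log+|w| - \<alpha> log+|z|)\<close>,
  where \<open>C\<close> is the log of the sum of the absolute values of the coefficients.\<close>
lemma logplus_qeval_le:
  fixes p :: "complex poly" and q :: "complex poly poly"
  assumes "degree p > degree q" "lead_coeff (lead_coeff q) = 1"
  obtains C where "C \<ge> 0" "\<And>z w. logplus (norm (qeval q z w)) \<le> C
      + alpha_exp p q * real (degree p) * logplus (norm z)
      + real (degree q) * max 0 (logplus (norm w) - alpha_exp p q * logplus (norm z))"
proof -
  define \<alpha> where "\<alpha> = alpha_exp p q"
  define S where "S = (\<Sum>m\<le>degree q. \<Sum>n\<le>degree (coeff q m). norm (coeff (coeff q m) n))"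
  have estimate: "logplus (norm (qeval q z w)) \<le> ln (max 1 S)
      + \<alpha> * real (degree p) * logplus (norm z)
      + real (degree q) * max 0 (logplus (norm w) - \<alpha> * logplus (norm z))" for z w
  proof -
    define X where "X = \<alpha> * real (degree p) * logplus (norm z)
      + real (degree q) * max 0 (logplus (norm w) - \<alpha> * logplus (norm z))"
    have "0 \<le> \<alpha>" unfolding \<alpha>_def by (rule alpha_exp_nonneg[OF assms])
    hence "1 \<le> exp X" unfolding X_def using logplus_nonneg[of "norm z"] by simp
    have monomial: "norm (coeff (coeff q m) n) * (norm z ^ n * norm w ^ m)
        \<le> norm (coeff (coeff q m) n) * exp X" for n m
    proof (cases "coeff (coeff q m) n = 0")
      case False
      have "norm z ^ n * norm w ^ m \<le> max 1 (norm z) ^ n * max 1 (norm w) ^ m"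
        by (intro mult_mono power_mono) auto
      also have "\<dots> = exp (real n * logplus (norm z) + real m * logplus (norm w))"
        by (simp add: max_1_eq_exp_logplus exp_add exp_of_nat_mult[symmetric])
      also have "\<dots> \<le> exp X"
        using monomial_exponent_bound[OF logplus_nonneg alpha_exp_monomial_bound(2,1)[OF assms(1) False]]
        unfolding X_def \<alpha>_def by simp
      finally show ?thesis by (intro mult_left_mono) auto
    qed simp
    have "norm (qeval q z w) \<le> S * exp X"
      using order.trans[OF norm_qeval_le sum_mono[OF sum_mono[OF monomial]]]
      unfolding S_def by (simp add: sum_distrib_right)
    also have "\<dots> \<le> max 1 S * exp X" by (intro mult_right_mono) auto
    finally have "max 1 (norm (qeval q z w)) \<le> max 1 S * exp X"
      using mult_mono[of 1 "max 1 S" 1 "exp X"] \<open>1 \<le> exp X\<close> by simp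
    hence "ln (max 1 (norm (qeval q z w))) \<le> ln (max 1 S * exp X)" by (intro ln_mono) auto
    also have "\<dots> = ln (max 1 S) + X" by (subst ln_mult) auto
    finally show ?thesis unfolding X_def logplus_eq_ln_max[OF norm_ge_zero] by linarith
  qed
  have "ln (max 1 S) \<ge> 0" by simp
  from this estimate[unfolded \<alpha>_def] show ?thesis by (rule that)
qed

theorem proposition4p1:
  fixes p :: "complex poly" and q :: "complex poly poly" and z w :: complex
  assumes "degree p \<ge> 2" and "lead_coeff p = 1"
    and "degree q \<ge> 2" and "lead_coeff (lead_coeff q) = 1"
    and "degree p > degree q"
    and "z \<in> escape_set p"
  shows "limsup (\<lambda>n. ereal (logplus (norm (Qiter p q n z w)) / real (degree p) ^ n))
           \<le> ereal (alpha_exp p q * green p z)"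
proof -
  define r where "r k = logplus (norm ((poly p ^^ k) z))" for k
  define u where "u k = logplus (norm (Qiter p q k z w))" for k
  obtain R K where p_defect: "\<And>z. norm z \<ge> R \<Longrightarrow>
      \<bar>logplus (norm (poly p z)) - real (degree p) * logplus (norm z)\<bar> \<le> K"
    by (rule logplus_monic_poly_bounded_defect[of p]) (use assms(1,2) in auto)
  obtain C where "C \<ge> 0" and q_step: "\<And>z w. logplus (norm (qeval q z w)) \<le> C
      + alpha_exp p q * real (degree p) * logplus (norm z)
      + real (degree q) * max 0 (logplus (norm w) - alpha_exp p q * logplus (norm z))"
    using logplus_qeval_le[OF assms(5,4)] by blast
  from assms(6) obtain N where N: "\<And>k. k \<ge> N \<Longrightarrow> norm ((poly p ^^ k) z) \<ge> R"
    unfolding escape_set_def filterlim_at_top eventually_sequentially by blast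
  have r_defect: "\<bar>r (Suc k) - real (degree p) * r k\<bar> \<le> K" if "k \<ge> N" for k
    unfolding r_def using p_defect[OF N[OF that]] by simp
  have u_step: "u (Suc k) \<le> C + alpha_exp p q * real (degree p) * r k
      + real (degree q) * max 0 (u k - alpha_exp p q * r k)" for k
    unfolding u_def r_def Qiter_Suc_last by (rule q_step)
  have "convergent (\<lambda>n. r n / real (degree p) ^ n)"
    by (rule convergent_div_power_of_bounded_defect[where r=r and N=N, OF _ r_defect]) (use assms(1) in simp)
  then obtain G where G: "(\<lambda>n. r n / real (degree p) ^ n) \<longlonglongrightarrow> G" by (auto simp: convergent_def)
  have "green p z = G" unfolding green_def using G r_def by (simp add: limI)
  moreover have "limsup (\<lambda>n. ereal (u n / real (degree p) ^ n)) \<le> ereal (alpha_exp p q * G)"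
    by (rule limsup_div_power_le[OF _ _ \<open>C \<ge> 0\<close> r_defect u_step G]) (use assms in auto)
  ultimately show ?thesis unfolding u_def by simp
qed

end
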